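(* Let $n,m\ge1$, let $\mu\in\mathbb{R}^n_{\ge0}$, $\nu\in\mathbb{R}^m_{\ge0}$ be probability vectors, let $D_X\in\mathbb{R}^{n\times n}$, $D_Y\in\mathbb{R}^{m\times m}$ be symmetric, let $C_1=\{\pi\ge0:\pi\mathbf{1}_m=\mu\}$, $C_2=\{\pi\ge0:\pi^T\mathbf{1}_n=\nu\}$ in $\mathbb{R}^{n\times m}$, let $f(\pi,w)=-\mathrm{Tr}(D_X\pi D_Yw^T)$, and let $\rho>0$. Take $h(x)=\tfrac12\|x\|^2$, so $D_h(x,y)=\tfrac12\|x-y\|^2$, and define $$F_\rho(\pi,w)=f(\pi,w)+\mathbb{I}_{C_1}(\pi)+\mathbb{I}_{C_2}(w)+\tfrac{\rho}{2}\|\pi-w\|^2.$$ Let $\{(\pi^k,w^k)\}_{k\ge0}$ be generated from an initial point by $$\pi^{k+1}=\arg\min_{\pi\in C_1}\{f(\pi,w^k)+\tfrac{\rho}{2}\|\pi-w^k\|^2\},\qquad w^{k+1}=\arg\min_{w\in C_2}\{f(\pi^{k+1},w)+\tfrac{\rho}{2}\|w-\pi^{k+1}\|^2\}.$$ Then the sequence $\{(\pi^k,w^k)\}$ converges to a critical point of $F_\rho$, i.e. to a point $(\bar\pi,\bar w)$ with $0\in\partial F_\rho(\bar\pi,\bar w)$.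
   Context: $\|\cdot\|$ is the Frobenius norm; $\pi\ge0$ is entrywise; $\mathbb{I}_C$ is the indicator function of $C$ ($0$ on $C$, $+\infty$ outside); $\partial F_\rho$ denotes the (limiting) subdifferential, which here equals $\nabla f(\pi,w)+\rho(\pi-w,\,w-\pi)+\mathcal{N}_{C_1}(\pi)\times\mathcal{N}_{C_2}(w)$ for $\pi\in C_1,w\in C_2$, with $\mathcal{N}_C$ the normal cone. *)

theory Defs
  imports "HOL-Analysis.Analysis"
begin

text \<open>Matrices in R^(n x m) are represented as real^'m^'n (rows indexed by 'n).
  The norm on this type is the Frobenius norm and the inner product is the
  Frobenius inner product.\<close>

definition prob_vec :: "real^'n \<Rightarrow> bool" where
  "prob_vec v \<longleftrightarrow> (\<forall>i. v $ i \<ge> 0) \<and> (\<Sum>i\<in>UNIV. v $ i) = 1"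

definition C1 :: "real^'n \<Rightarrow> (real^'m^'n) set" where
  "C1 \<mu> = {p. (\<forall>i j. p $ i $ j \<ge> 0) \<and> p *v (\<chi> j. 1) = \<mu>}"

definition C2 :: "real^'m \<Rightarrow> (real^'m^'n) set" where
  "C2 \<nu> = {p. (\<forall>i j. p $ i $ j \<ge> 0) \<and> transpose p *v (\<chi> i. 1) = \<nu>}"

definition gw_obj :: "real^'n^'n \<Rightarrow> real^'m^'m \<Rightarrow> real^'m^'n \<Rightarrow> real^'m^'n \<Rightarrow> real" where
  "gw_obj DX DY p w = - trace (DX ** p ** DY ** transpose w)"

definition normal_cone :: "'a::real_inner set \<Rightarrow> 'a \<Rightarrow> 'a set" where
  "normal_cone C x = {v. \<forall>y\<in>C. inner v (y - x) \<le> 0}"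

text \<open>Critical point of F_rho = f + I_C1 + I_C2 + rho/2 ||pi - w||^2:
  0 \<in> \<nabla>f(pi,w) + rho(pi - w, w - pi) + N_C1(pi) x N_C2(w), with pi \<in> C1, w \<in> C2.\<close>
definition critical_F ::
  "((real^'m^'n) \<times> (real^'m^'n) \<Rightarrow> real) \<Rightarrow> (real^'m^'n) set \<Rightarrow> (real^'m^'n) set
    \<Rightarrow> real \<Rightarrow> real^'m^'n \<Rightarrow> real^'m^'n \<Rightarrow> bool" where
  "critical_F f A B \<rho> p w \<longleftrightarrow> p \<in> A \<and> w \<in> B \<and>
     (\<exists>G. (f has_derivative (\<lambda>h. inner G h)) (at (p, w)) \<and>
          - (G + (\<rho> *\<^sub>R (p - w), \<rho> *\<^sub>R (w - p))) \<in> normal_cone A p \<times> normal_cone B w)"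

end

theory Submission
  imports Defs
begin

(*
  On C1 x C2 the function F_rho is the quadratic form x |-> <G x, x>/2 of a symmetric linear
  operator G, and C1, C2 are polyhedra.  Each half-step minimises a quadratic that is
  rho-strongly convex in the active block, which gives the sufficient decrease
  F(y') + rho/2 |y' - y|^2 <= F(y) and, from the two optimality conditions, a subgradient of
  F + I_{C1 x C2} at y' of norm O(|y' - y|).  A quadratic function on a polyhedron satisfies
  the Lojasiewicz inequality with exponent 1/2 at every point: near the point the polyhedron
  is covered by finitely many pieces xb + L whose normal cones are orthogonal to L, and on a
  subspace the inequality is linear algebra.  By compactness there is a cluster point, and the
  argument of Attouch and Bolte turns the three estimates into finite length of the iterates,
  hence convergence; the optimality conditions then pass to the limit.
*)

section \<open>Lojasiewicz inequality for quadratic functions on polyhedra\<close>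

lemma orthogonal_projection_exists:
  fixes S :: "'a::euclidean_space set"
  assumes "subspace S"
  obtains P where "linear P" "\<And>x. P x \<in> S" "\<And>x d. d \<in> S \<Longrightarrow> inner (x - P x) d = 0"
    "\<And>x. norm (P x) \<le> norm x"
proof -
  obtain T where T: "T \<subseteq> S" "pairwise orthogonal T" "span T = S"
    using orthogonal_basis_subspace[OF assms] by metis
  define P where "P x = (\<Sum>b\<in>T. (b \<bullet> x / (b \<bullet> b)) *\<^sub>R b)" for x
  have "linear P"
    unfolding P_def
    by (rule linearI) (simp_all add: inner_add_right add_divide_distrib scaleR_add_left sum.distrib scaleR_sum_right)
  moreover have in_S: "P x \<in> S" for x
    unfolding P_def using T assms by (simp add: subspace_sum subspace_scale subsetD)
  moreover have orth: "inner (x - P x) d = 0" if "d \<in> S" for x d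
    using Gram_Schmidt_step[OF T(2), of d x] T(3) that
    by (simp add: P_def orthogonal_def inner_commute)
  moreover have "norm (P x) \<le> norm x" for x
  proof -
    have "(norm x)^2 = (norm (P x))^2 + (norm (x - P x))^2"
      using orth[OF in_S, of x] norm_add_Pythagorean[of "P x" "x - P x"]
      by (simp add: orthogonal_def inner_commute)
    then show ?thesis using power2_le_imp_le[of "norm (P x)" "norm x"] by simp
  qed
  ultimately show ?thesis using that by blast
qed

lemma projection_eq_zero:
  fixes P :: "'a::real_inner \<Rightarrow> 'a"
  assumes "\<And>x. P x \<in> S" "\<And>x d. d \<in> S \<Longrightarrow> inner (x - P x) d = 0"
    and "\<And>d. d \<in> S \<Longrightarrow> inner h d = 0"
  shows "P h = 0"
proof -
  have "inner (h - P h) (P h) = 0" "inner h (P h) = 0" using assms by blast+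
  then show ?thesis by (simp add: inner_diff_left)
qed

text \<open>On the orthogonal complement of its kernel in S, T is bounded below; by symmetry the
  kernel component of z does not contribute to the form.\<close>

lemma symmetric_form_le_norm_sq:
  fixes T :: "'a::euclidean_space \<Rightarrow> 'a"
  assumes T: "linear T" and S: "subspace S"
    and sym: "\<And>x y. x \<in> S \<Longrightarrow> y \<in> S \<Longrightarrow> inner (T x) y = inner x (T y)"
  obtains c where "c \<ge> 0" "\<And>z. z \<in> S \<Longrightarrow> inner (T z) z \<le> c * (norm (T z))^2"
proof -
  define K where "K = {k\<in>S. T k = 0}"
  define S' where "S' = {y\<in>S. \<forall>k\<in>K. inner y k = 0}"
  have "subspace K" "subspace S'"
    unfolding K_def S'_def using S T
    by (auto simp: subspace_def linear_0 linear_add linear_scale inner_add_left)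
  have "bounded_linear T" using T by (simp add: linear_conv_bounded_linear)
  moreover have "\<forall>y\<in>S'. T y = 0 \<longrightarrow> y = 0"
    unfolding S'_def K_def by auto
  ultimately obtain e where e: "e > 0" "\<And>y. y \<in> S' \<Longrightarrow> e * norm y \<le> norm (T y)"
    using injective_imp_isometric[OF closed_subspace \<open>subspace S'\<close>] \<open>subspace S'\<close> by metis
  obtain PK where PK: "\<And>x. PK x \<in> K" "\<And>x d. d \<in> K \<Longrightarrow> inner (x - PK x) d = 0"
    using orthogonal_projection_exists[OF \<open>subspace K\<close>] by metis
  have bound: "inner (T z) z \<le> 1 / e * (norm (T z))^2" if z: "z \<in> S" for z
  proof -
    define z1 where "z1 = z - PK z"
    have "PK z \<in> S" "T (PK z) = 0" using PK(1)[of z] unfolding K_def by auto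
    then have "z1 \<in> S'"
      using PK(2) z S unfolding S'_def z1_def by (auto simp: subspace_diff)
    have Tz: "T z = T z1"
      using \<open>T (PK z) = 0\<close> T by (simp add: z1_def linear_diff)
    have "inner (T z) z = inner (T z1) z1 + inner z1 (T (PK z))"
      using sym[of z1 "PK z"] \<open>z1 \<in> S'\<close> \<open>PK z \<in> S\<close> Tz unfolding S'_def
      by (simp add: z1_def inner_diff_right inner_diff_left)
    also have "\<dots> \<le> norm (T z) * norm z1"
      using Tz \<open>T (PK z) = 0\<close> norm_cauchy_schwarz by simp
    also have "\<dots> \<le> norm (T z) * (norm (T z) / e)"
      using e(2)[OF \<open>z1 \<in> S'\<close>] Tz e(1) by (intro mult_left_mono) (auto simp: field_simps)
    finally show ?thesis by (simp add: power2_eq_square)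
  qed
  show ?thesis by (rule that[OF _ bound]) (use e(1) in auto)
qed

lemma quadratic_lojasiewicz_subspace_orthogonal:
  fixes G :: "'a::euclidean_space \<Rightarrow> 'a"
  assumes G: "linear G" and sym: "\<And>x y. inner (G x) y = inner x (G y)" and L: "subspace L"
  obtains c where "c \<ge> 0"
    "\<And>z g. z \<in> L \<Longrightarrow> (\<forall>d\<in>L. inner g d = inner (G z) d) \<Longrightarrow> inner (G z) z \<le> c * (norm g)^2"
proof -
  obtain P where P: "linear P" "\<And>x. P x \<in> L" "\<And>x d. d \<in> L \<Longrightarrow> inner (x - P x) d = 0"
    "\<And>x. norm (P x) \<le> norm x"
    using orthogonal_projection_exists[OF L] by metis
  have P_inner: "inner (P x) d = inner x d" if "d \<in> L" for x d
    using P(3)[OF that, of x] by (simp add: inner_diff_left)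
  have "inner (P (G x)) y = inner x (P (G y))" if "x \<in> L" "y \<in> L" for x y
    using that by (simp add: P_inner sym inner_commute[of x])
  then obtain c where c: "c \<ge> 0" "\<And>z. z \<in> L \<Longrightarrow> inner (P (G z)) z \<le> c * (norm (P (G z)))^2"
    using symmetric_form_le_norm_sq[of "\<lambda>z. P (G z)" L] P(1) G L
    by (metis linear_compose[unfolded o_def])
  have "inner (G z) z \<le> c * (norm g)^2"
    if z: "z \<in> L" and g: "\<forall>d\<in>L. inner g d = inner (G z) d" for z g
  proof -
    have "P (g - G z) = 0"
    proof (rule projection_eq_zero[OF P(2,3)])
      fix d assume "d \<in> L"
      then show "inner (g - G z) d = 0" using g by (simp add: inner_diff_left)
    qed
    then have "P (G z) = P g" using P(1) by (simp add: linear_diff)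
    have "inner (G z) z = inner (P (G z)) z" using P_inner[OF z] by simp
    also have "\<dots> \<le> c * (norm (P (G z)))^2" by (rule c(2)[OF z])
    also have "\<dots> = c * (norm (P g))^2" using \<open>P (G z) = P g\<close> by simp
    also have "\<dots> \<le> c * (norm g)^2"
      using P(4)[of g] c(1) by (intro mult_left_mono power_mono) auto
    finally show ?thesis .
  qed
  with c(1) show ?thesis using that by blast
qed

lemma quadratic_lojasiewicz_subspace_nonorthogonal:
  fixes G :: "'a::euclidean_space \<Rightarrow> 'a"
  assumes G: "linear G" and L: "subspace L" and "d0 \<in> L" "inner b d0 \<noteq> 0"
  shows "\<forall>\<^sub>F z in nhds 0. \<forall>g. (\<forall>d\<in>L. inner g d = inner (G z + b) d) \<longrightarrow>
    inner (G z) z / 2 + inner b z \<le> (norm g)^2"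
proof -
  obtain P where P: "linear P" "\<And>x. P x \<in> L" "\<And>x d. d \<in> L \<Longrightarrow> inner (x - P x) d = 0"
    "\<And>x. norm (P x) \<le> norm x"
    using orthogonal_projection_exists[OF L] by metis
  define \<beta> where "\<beta> = norm (P b)"
  have "inner (P b) d0 = inner b d0" using P(3)[OF \<open>d0 \<in> L\<close>, of b] by (simp add: inner_diff_left)
  then have "\<beta> > 0" using \<open>inner b d0 \<noteq> 0\<close> by (auto simp: \<beta>_def)
  have "bounded_linear (\<lambda>z. P (G z))" "bounded_linear G"
    using P(1) G by (auto simp: linear_conv_bounded_linear intro: bounded_linear_compose)
  then have "((\<lambda>z. P (G z)) \<longlongrightarrow> P (G 0)) (nhds 0)" "(G \<longlongrightarrow> G 0) (nhds 0)"
    by (auto intro: bounded_linear.tendsto[OF _ filterlim_ident])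
  then have "((\<lambda>z. P (G z)) \<longlongrightarrow> 0) (nhds 0)" and G0: "(G \<longlongrightarrow> 0) (nhds 0)"
    using linear_0[OF P(1)] linear_0[OF G] by simp_all
  moreover have "((\<lambda>z. inner (G z) z) \<longlongrightarrow> 0) (nhds 0)" "((\<lambda>z. inner b z) \<longlongrightarrow> 0) (nhds 0)"
    using tendsto_inner[OF G0 filterlim_ident] tendsto_inner[OF tendsto_const[of b "nhds 0"] filterlim_ident]
    by simp_all
  ultimately have lim_grad: "((\<lambda>z. norm (P (G z))) \<longlongrightarrow> 0) (nhds 0)"
    and lim_value: "((\<lambda>z. inner (G z) z / 2 + inner b z) \<longlongrightarrow> 0) (nhds 0)"
    using tendsto_norm_zero tendsto_add_zero[OF tendsto_divide_zero] by blast+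
  have "\<beta> / 2 > 0" "\<beta>^2 / 4 > 0" using \<open>\<beta> > 0\<close> by simp_all
  then have "\<forall>\<^sub>F z in nhds 0. norm (P (G z)) < \<beta> / 2"
    and "\<forall>\<^sub>F z in nhds 0. inner (G z) z / 2 + inner b z < \<beta>^2 / 4"
    using order_tendstoD(2)[OF lim_grad] order_tendstoD(2)[OF lim_value] by blast+
  then show ?thesis
  proof (rule eventually_elim2, intro allI impI)
    fix z g
    assume small: "norm (P (G z)) < \<beta> / 2" "inner (G z) z / 2 + inner b z < \<beta>^2 / 4"
      and g: "\<forall>d\<in>L. inner g d = inner (G z + b) d"
    have "P (g - (G z + b)) = 0"
    proof (rule projection_eq_zero[OF P(2,3)])
      fix d assume "d \<in> L"
      then show "inner (g - (G z + b)) d = 0" using g by (simp add: inner_diff_left)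
    qed
    then have "P b = P g - P (G z)" using P(1) by (simp add: linear_diff linear_add algebra_simps)
    then have "\<beta> \<le> norm (P g) + norm (P (G z))"
      using norm_triangle_ineq4[of "P g" "P (G z)"] by (simp add: \<beta>_def)
    then have "\<beta> / 2 \<le> norm g" using small P(4)[of g] by linarith
    then have "\<beta>^2 / 4 \<le> (norm g)^2"
      using power_mono[of "\<beta> / 2" "norm g" 2] \<open>\<beta> > 0\<close> by (simp add: power_divide)
    then show "inner (G z) z / 2 + inner b z \<le> (norm g)^2" using small by simp
  qed
qed

text \<open>A vector g with \<langle>g, d\<rangle> = \<langle>G z + b, d\<rangle> for all d \<in> L represents the gradient on L of
  z \<mapsto> \<langle>G z, z\<rangle>/2 + \<langle>b, z\<rangle>, so this is the Lojasiewicz inequality with exponent 1/2 at 0.\<close>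

lemma quadratic_lojasiewicz_subspace:
  fixes G :: "'a::euclidean_space \<Rightarrow> 'a"
  assumes G: "linear G" and sym: "\<And>x y. inner (G x) y = inner x (G y)" and L: "subspace L"
  obtains c where "c \<ge> 0"
    "\<forall>\<^sub>F z in nhds 0. z \<in> L \<longrightarrow> (\<forall>g. (\<forall>d\<in>L. inner g d = inner (G z + b) d) \<longrightarrow>
        inner (G z) z / 2 + inner b z \<le> c * (norm g)^2)"
proof (cases "\<forall>d\<in>L. inner b d = 0")
  case True
  obtain c where "c \<ge> 0"
    and c: "\<And>z g. z \<in> L \<Longrightarrow> (\<forall>d\<in>L. inner g d = inner (G z) d) \<Longrightarrow> inner (G z) z \<le> c * (norm g)^2"
    using quadratic_lojasiewicz_subspace_orthogonal[OF G sym L] by blast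
  have "inner (G z) z / 2 + inner b z \<le> c / 2 * (norm g)^2"
    if "z \<in> L" "\<forall>d\<in>L. inner g d = inner (G z + b) d" for z g
    using c[of z g] that True by (simp add: inner_add_left)
  then show ?thesis using that[of "c / 2"] \<open>c \<ge> 0\<close> by simp
next
  case False
  then obtain d0 where "d0 \<in> L" "inner b d0 \<noteq> 0" by blast
  from quadratic_lojasiewicz_subspace_nonorthogonal[OF G L this]
  have "\<forall>\<^sub>F z in nhds 0. z \<in> L \<longrightarrow> (\<forall>g. (\<forall>d\<in>L. inner g d = inner (G z + b) d) \<longrightarrow>
      inner (G z) z / 2 + inner b z \<le> 1 * (norm g)^2)"
    by (rule eventually_mono) simp
  then show ?thesis using that[of 1] by simp
qed

text \<open>For a polyhedron, L is the direction space of the face containing x in its relative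
  interior; this is the only property of C1 and C2 the Lojasiewicz inequality needs.\<close>

definition locally_face_flat :: "'a::real_inner set \<Rightarrow> bool" where
  "locally_face_flat C \<longleftrightarrow> (\<forall>xb\<in>C. \<exists>Ls. finite Ls \<and> (\<forall>L\<in>Ls. subspace L) \<and>
     (\<forall>\<^sub>F x in nhds xb. x \<in> C \<longrightarrow>
        (\<exists>L\<in>Ls. x - xb \<in> L \<and> (\<forall>n\<in>normal_cone C x. \<forall>d\<in>L. inner n d = 0))))"

lemma normal_cone_Times:
  assumes "a \<in> A" "b \<in> B"
  shows "normal_cone (A \<times> B) (a, b) = normal_cone A a \<times> normal_cone B b"
proof -
  have "(\<forall>y\<in>A \<times> B. inner (v1, v2) (y - (a, b)) \<le> 0) \<longleftrightarrow>
      (\<forall>y\<in>A. inner v1 (y - a) \<le> 0) \<and> (\<forall>y\<in>B. inner v2 (y - b) \<le> 0)" for v1 v2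
  proof safe
    fix y assume "\<forall>y\<in>A \<times> B. inner (v1, v2) (y - (a, b)) \<le> 0" "y \<in> A"
    then have "inner (v1, v2) ((y, b) - (a, b)) \<le> 0" using assms by blast
    then show "inner v1 (y - a) \<le> 0" by (simp add: inner_Pair)
  next
    fix y assume "\<forall>y\<in>A \<times> B. inner (v1, v2) (y - (a, b)) \<le> 0" "y \<in> B"
    then have "inner (v1, v2) ((a, y) - (a, b)) \<le> 0" using assms by blast
    then show "inner v2 (y - b) \<le> 0" by (simp add: inner_Pair)
  next
    fix y1 y2 assume "\<forall>y\<in>A. inner v1 (y - a) \<le> 0" "\<forall>y\<in>B. inner v2 (y - b) \<le> 0"
      and "y1 \<in> A" "y2 \<in> B"
    then show "inner (v1, v2) ((y1, y2) - (a, b)) \<le> 0"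
      by (simp add: inner_Pair add_nonpos_nonpos)
  qed
  then show ?thesis unfolding normal_cone_def set_eq_iff by (simp add: split_paired_all)
qed

lemma locally_face_flat_Times:
  assumes A: "locally_face_flat A" and B: "locally_face_flat B"
  shows "locally_face_flat (A \<times> B)"
  unfolding locally_face_flat_def
proof (intro ballI)
  fix xb assume "xb \<in> A \<times> B"
  then obtain a b where xb: "xb = (a, b)" "a \<in> A" "b \<in> B" by blast
  obtain LsA where LsA: "finite LsA" "\<forall>L\<in>LsA. subspace L"
    "\<forall>\<^sub>F x in nhds a. x \<in> A \<longrightarrow> (\<exists>L\<in>LsA. x - a \<in> L \<and> (\<forall>n\<in>normal_cone A x. \<forall>d\<in>L. inner n d = 0))"
    using A xb(2) unfolding locally_face_flat_def by blast
  obtain LsB where LsB: "finite LsB" "\<forall>L\<in>LsB. subspace L"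
    "\<forall>\<^sub>F y in nhds b. y \<in> B \<longrightarrow> (\<exists>L\<in>LsB. y - b \<in> L \<and> (\<forall>n\<in>normal_cone B y. \<forall>d\<in>L. inner n d = 0))"
    using B xb(3) unfolding locally_face_flat_def by blast
  define Ls where "Ls = (\<lambda>(L1, L2). L1 \<times> L2) ` (LsA \<times> LsB)"
  have "finite Ls" "\<forall>L\<in>Ls. subspace L"
    unfolding Ls_def using LsA LsB by (auto intro: subspace_Times)
  moreover have flat: "\<exists>L\<in>Ls. p - (a, b) \<in> L \<and> (\<forall>n\<in>normal_cone (A \<times> B) p. \<forall>d\<in>L. inner n d = 0)"
    if "p \<in> A \<times> B"
      and near: "fst p \<in> A \<longrightarrow> (\<exists>L1\<in>LsA. fst p - a \<in> L1 \<and> (\<forall>n\<in>normal_cone A (fst p). \<forall>d\<in>L1. inner n d = 0))"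
        "snd p \<in> B \<longrightarrow> (\<exists>L2\<in>LsB. snd p - b \<in> L2 \<and> (\<forall>n\<in>normal_cone B (snd p). \<forall>d\<in>L2. inner n d = 0))"
    for p
  proof -
    obtain x y where p: "p = (x, y)" "x \<in> A" "y \<in> B" using \<open>p \<in> A \<times> B\<close> by auto
    obtain L1 L2 where L1: "L1 \<in> LsA" "x - a \<in> L1" "\<forall>n\<in>normal_cone A x. \<forall>d\<in>L1. inner n d = 0"
      and L2: "L2 \<in> LsB" "y - b \<in> L2" "\<forall>n\<in>normal_cone B y. \<forall>d\<in>L2. inner n d = 0"
      using near p by auto
    have "L1 \<times> L2 \<in> Ls" using L1 L2 unfolding Ls_def by auto
    moreover have "\<forall>n\<in>normal_cone (A \<times> B) p. \<forall>d\<in>L1 \<times> L2. inner n d = 0"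
      using L1 L2 normal_cone_Times[OF p(2,3)] p(1) by (auto simp: inner_prod_def)
    ultimately show ?thesis using L1(2) L2(2) p(1) by (intro bexI[of _ "L1 \<times> L2"]) auto
  qed
  have "\<forall>\<^sub>F p in nhds (a, b). p \<in> A \<times> B \<longrightarrow>
      (\<exists>L\<in>Ls. p - (a, b) \<in> L \<and> (\<forall>n\<in>normal_cone (A \<times> B) p. \<forall>d\<in>L. inner n d = 0))"
    unfolding nhds_prod using eventually_prodI[OF LsA(3) LsB(3)]
    by (rule eventually_mono) (use flat in blast)
  ultimately show "\<exists>Ls. finite Ls \<and> (\<forall>L\<in>Ls. subspace L) \<and>
      (\<forall>\<^sub>F x in nhds xb. x \<in> A \<times> B \<longrightarrow>
        (\<exists>L\<in>Ls. x - xb \<in> L \<and> (\<forall>n\<in>normal_cone (A \<times> B) x. \<forall>d\<in>L. inner n d = 0)))"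
    unfolding xb(1) by blast
qed

lemma quadratic_lojasiewicz_finite_subspaces:
  fixes G :: "'a::euclidean_space \<Rightarrow> 'a"
  assumes G: "linear G" and sym: "\<And>x y. inner (G x) y = inner x (G y)"
    and Ls: "finite Ls" "\<forall>L\<in>Ls. subspace L"
  obtains c where "c \<ge> 0"
    "\<forall>\<^sub>F z in nhds 0. \<forall>L\<in>Ls. z \<in> L \<longrightarrow> (\<forall>g. (\<forall>d\<in>L. inner g d = inner (G z + b) d) \<longrightarrow>
        inner (G z) z / 2 + inner b z \<le> c * (norm g)^2)"
proof -
  have "\<exists>c. c \<ge> 0 \<and> (\<forall>\<^sub>F z in nhds 0. z \<in> L \<longrightarrow> (\<forall>g. (\<forall>d\<in>L. inner g d = inner (G z + b) d) \<longrightarrow>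
        inner (G z) z / 2 + inner b z \<le> c * (norm g)^2))" if "L \<in> Ls" for L
  proof -
    have "subspace L" using Ls(2) that by blast
    then obtain c where "c \<ge> 0" "\<forall>\<^sub>F z in nhds 0. z \<in> L \<longrightarrow> (\<forall>g. (\<forall>d\<in>L. inner g d = inner (G z + b) d) \<longrightarrow>
        inner (G z) z / 2 + inner b z \<le> c * (norm g)^2)"
      by (rule quadratic_lojasiewicz_subspace[OF G sym])
    then show ?thesis by blast
  qed
  then obtain c where c: "\<forall>L\<in>Ls. c L \<ge> 0 \<and> (\<forall>\<^sub>F z in nhds 0. z \<in> L \<longrightarrow>
      (\<forall>g. (\<forall>d\<in>L. inner g d = inner (G z + b) d) \<longrightarrow>
        inner (G z) z / 2 + inner b z \<le> c L * (norm g)^2))"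
    by (rule exE[OF bchoice[OF ballI]])
  then have "\<forall>\<^sub>F z in nhds 0. \<forall>L\<in>Ls. z \<in> L \<longrightarrow> (\<forall>g. (\<forall>d\<in>L. inner g d = inner (G z + b) d) \<longrightarrow>
        inner (G z) z / 2 + inner b z \<le> c L * (norm g)^2)"
    by (intro eventually_ball_finite[OF Ls(1)]) blast
  moreover have "c L * (norm g)^2 \<le> (\<Sum>L\<in>Ls. c L) * (norm g)^2" if "L \<in> Ls" for L and g :: 'a
    using that Ls(1) c by (intro mult_right_mono member_le_sum) auto
  ultimately have "\<forall>\<^sub>F z in nhds 0. \<forall>L\<in>Ls. z \<in> L \<longrightarrow> (\<forall>g. (\<forall>d\<in>L. inner g d = inner (G z + b) d) \<longrightarrow>
        inner (G z) z / 2 + inner b z \<le> (\<Sum>L\<in>Ls. c L) * (norm g)^2)"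
    by (elim eventually_mono) (meson order_trans)
  moreover have "(\<Sum>L\<in>Ls. c L) \<ge> 0" using c by (simp add: sum_nonneg)
  ultimately show ?thesis using that by blast
qed

lemma quadratic_lojasiewicz:
  fixes G :: "'a::euclidean_space \<Rightarrow> 'a"
  assumes G: "linear G" and sym: "\<And>x y. inner (G x) y = inner x (G y)"
    and C: "locally_face_flat C" and "xb \<in> C"
  obtains c where "c \<ge> 0" "\<forall>\<^sub>F x in nhds xb. x \<in> C \<longrightarrow> (\<forall>n\<in>normal_cone C x.
      inner (G x) x / 2 - inner (G xb) xb / 2 \<le> c * (norm (G x + n))^2)"
proof -
  obtain Ls where Ls: "finite Ls" "\<forall>L\<in>Ls. subspace L"
    and near: "\<forall>\<^sub>F x in nhds xb. x \<in> C \<longrightarrow>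
      (\<exists>L\<in>Ls. x - xb \<in> L \<and> (\<forall>n\<in>normal_cone C x. \<forall>d\<in>L. inner n d = 0))"
    using C \<open>xb \<in> C\<close> unfolding locally_face_flat_def by blast
  obtain c where "c \<ge> 0" and "\<forall>\<^sub>F z in nhds 0. \<forall>L\<in>Ls. z \<in> L \<longrightarrow>
      (\<forall>g. (\<forall>d\<in>L. inner g d = inner (G z + G xb) d) \<longrightarrow>
        inner (G z) z / 2 + inner (G xb) z \<le> c * (norm g)^2)"
    by (rule quadratic_lojasiewicz_finite_subspaces[OF G sym Ls])
  then have "\<forall>\<^sub>F x in nhds xb. \<forall>L\<in>Ls. x - xb \<in> L \<longrightarrow>
      (\<forall>g. (\<forall>d\<in>L. inner g d = inner (G (x - xb) + G xb) d) \<longrightarrow>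
        inner (G (x - xb)) (x - xb) / 2 + inner (G xb) (x - xb) \<le> c * (norm g)^2)"
    by (subst (asm) filtermap_nhds_shift[of xb xb, simplified, symmetric]) (simp add: eventually_filtermap)
  then have "\<forall>\<^sub>F x in nhds xb. x \<in> C \<longrightarrow> (\<forall>n\<in>normal_cone C x.
      inner (G x) x / 2 - inner (G xb) xb / 2 \<le> c * (norm (G x + n))^2)"
  proof (rule eventually_elim2[OF _ near], intro impI ballI)
    fix x n
    assume bound: "\<forall>L\<in>Ls. x - xb \<in> L \<longrightarrow> (\<forall>g. (\<forall>d\<in>L. inner g d = inner (G (x - xb) + G xb) d) \<longrightarrow>
        inner (G (x - xb)) (x - xb) / 2 + inner (G xb) (x - xb) \<le> c * (norm g)^2)"
      and "x \<in> C \<longrightarrow> (\<exists>L\<in>Ls. x - xb \<in> L \<and> (\<forall>n\<in>normal_cone C x. \<forall>d\<in>L. inner n d = 0))"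
      and "x \<in> C" and n: "n \<in> normal_cone C x"
    then obtain L where L: "L \<in> Ls" "x - xb \<in> L" "\<forall>d\<in>L. inner n d = 0" by blast
    have "G (x - xb) + G xb = G x" using G by (simp add: linear_diff)
    then have "inner (G (x - xb)) (x - xb) / 2 + inner (G xb) (x - xb) \<le> c * (norm (G x + n))^2"
      using bound L by (simp add: inner_add_left)
    moreover have "inner (G x) x / 2 - inner (G xb) xb / 2
        = inner (G (x - xb)) (x - xb) / 2 + inner (G xb) (x - xb)"
      using G sym[of xb x] by (simp add: linear_diff inner_diff_left inner_diff_right inner_commute field_simps)
    ultimately show "inner (G x) x / 2 - inner (G xb) xb / 2 \<le> c * (norm (G x + n))^2" by simp
  qed
  with \<open>c \<ge> 0\<close> show ?thesis using that by blast
qed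

lemma normal_cone_orthogonal_two_sided:
  assumes "n \<in> normal_cone S x" "t > 0" "x + t *\<^sub>R d \<in> S" "x - t *\<^sub>R d \<in> S"
  shows "inner n d = 0"
proof -
  have "inner n ((x + t *\<^sub>R d) - x) \<le> 0" "inner n ((x - t *\<^sub>R d) - x) \<le> 0"
    using assms unfolding normal_cone_def by blast+
  then have "t * inner n d \<le> 0" "0 \<le> t * inner n d" by simp_all
  then have "inner n d \<le> 0" "0 \<le> inner n d"
    using \<open>t > 0\<close> by (simp_all add: mult_le_0_iff zero_le_mult_iff)
  then show ?thesis by linarith
qed

lemma positive_coordinates_bounded_below:
  fixes x :: "'a::euclidean_space"
  obtains m where "m > 0" "\<And>b. b \<in> Basis \<Longrightarrow> 0 < x \<bullet> b \<Longrightarrow> m \<le> x \<bullet> b"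
proof -
  define m where "m = Min (insert 1 ((\<lambda>b. x \<bullet> b) ` {b\<in>Basis. 0 < x \<bullet> b}))"
  have "finite ((\<lambda>b. x \<bullet> b) ` {b\<in>Basis. 0 < x \<bullet> b})" by simp
  then have "m > 0" "\<And>b. b \<in> Basis \<Longrightarrow> 0 < x \<bullet> b \<Longrightarrow> m \<le> x \<bullet> b"
    unfolding m_def by auto
  then show ?thesis using that by blast
qed

definition std_polyhedron :: "('a::euclidean_space \<Rightarrow> 'b) \<Rightarrow> 'b \<Rightarrow> 'a set" where
  "std_polyhedron f c = {x. (\<forall>b\<in>Basis. 0 \<le> x \<bullet> b) \<and> f x = c}"

lemma convex_std_polyhedron:
  assumes "linear f"
  shows "convex (std_polyhedron f c)"
  unfolding convex_def
proof (intro ballI allI impI)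
  fix x y and u v :: real
  assume "x \<in> std_polyhedron f c" "y \<in> std_polyhedron f c" and uv: "0 \<le> u" "0 \<le> v" "u + v = 1"
  then have "\<forall>b\<in>Basis. 0 \<le> (u *\<^sub>R x + v *\<^sub>R y) \<bullet> b" "f (u *\<^sub>R x + v *\<^sub>R y) = u *\<^sub>R c + v *\<^sub>R c"
    using assms by (simp_all add: std_polyhedron_def inner_add_left linear_add linear_scale)
  moreover have "u *\<^sub>R c + v *\<^sub>R c = c" using uv by (simp flip: scaleR_add_left)
  ultimately show "u *\<^sub>R x + v *\<^sub>R y \<in> std_polyhedron f c" by (simp add: std_polyhedron_def)
qed

lemma closed_std_polyhedron:
  fixes f :: "'a::euclidean_space \<Rightarrow> 'b::real_normed_vector"
  assumes "linear f"
  shows "closed (std_polyhedron f c)"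
proof -
  have "std_polyhedron f c = (\<Inter>b\<in>Basis. {x. x \<bullet> b \<ge> 0}) \<inter> {x. f x = c}"
    by (auto simp: std_polyhedron_def)
  moreover have "closed {x. f x = c}"
    using assms by (intro closed_Collect_eq continuous_on_const linear_continuous_on)
      (simp_all add: linear_conv_bounded_linear)
  ultimately show ?thesis by (auto intro: closed_halfspace_component_ge)
qed

lemma std_polyhedron_normal_cone_orthogonal:
  assumes f: "linear f" and x: "x \<in> std_polyhedron f c" and n: "n \<in> normal_cone (std_polyhedron f c) x"
    and d: "f d = 0" "\<And>b. b \<in> Basis \<Longrightarrow> x \<bullet> b = 0 \<Longrightarrow> d \<bullet> b = 0"
  shows "inner n d = 0"
proof -
  obtain m where m: "m > 0" "\<And>b. b \<in> Basis \<Longrightarrow> 0 < x \<bullet> b \<Longrightarrow> m \<le> x \<bullet> b"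
    using positive_coordinates_bounded_below by blast
  define t where "t = m / (norm d + 1)"
  have "norm d + 1 > 0" using norm_ge_zero[of d] by linarith
  then have "t > 0" "t * norm d < m"
    using m(1) by (simp_all add: t_def field_simps)
  have "x + s *\<^sub>R d \<in> std_polyhedron f c" if "\<bar>s\<bar> = t" for s
  proof -
    have "0 \<le> (x + s *\<^sub>R d) \<bullet> b" if "b \<in> Basis" for b
    proof (cases "x \<bullet> b = 0")
      case True
      then show ?thesis using d(2) \<open>b \<in> Basis\<close> by (simp add: inner_add_left)
    next
      case False
      then have "m \<le> x \<bullet> b" using x \<open>b \<in> Basis\<close> by (intro m(2)) (auto simp: std_polyhedron_def)
      moreover have "\<bar>s * (d \<bullet> b)\<bar> \<le> t * norm d"
        using Basis_le_norm[OF \<open>b \<in> Basis\<close>, of d] \<open>\<bar>s\<bar> = t\<close> \<open>t > 0\<close> by (simp add: abs_mult)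
      ultimately show ?thesis using \<open>t * norm d < m\<close> by (simp add: inner_add_left)
    qed
    then show ?thesis
      using x d(1) f by (simp add: std_polyhedron_def linear_add linear_scale)
  qed
  from this[of t] this[of "- t"] show ?thesis
    using normal_cone_orthogonal_two_sided[OF n \<open>t > 0\<close>] \<open>t > 0\<close> by simp
qed

lemma locally_face_flat_std_polyhedron:
  assumes f: "linear f"
  shows "locally_face_flat (std_polyhedron f c)"
  unfolding locally_face_flat_def
proof (intro ballI)
  fix xb assume xb: "xb \<in> std_polyhedron f c"
  define face where "face Z = {d. f d = 0 \<and> (\<forall>b\<in>Z. d \<bullet> b = 0)}" for Z
  have "finite (face ` Pow Basis)" "\<forall>L\<in>face ` Pow Basis. subspace L"
    using f by (auto simp: face_def subspace_def linear_0 linear_add linear_scale inner_add_left)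
  obtain m where m: "m > 0" "\<And>b. b \<in> Basis \<Longrightarrow> 0 < xb \<bullet> b \<Longrightarrow> m \<le> xb \<bullet> b"
    using positive_coordinates_bounded_below by blast
  have "x - xb \<in> face {b\<in>Basis. x \<bullet> b = 0} \<and>
      (\<forall>n\<in>normal_cone (std_polyhedron f c) x. \<forall>d\<in>face {b\<in>Basis. x \<bullet> b = 0}. inner n d = 0)"
    if x: "x \<in> std_polyhedron f c" and "dist x xb < m" for x
  proof (intro conjI ballI)
    have "xb \<bullet> b = 0" if "b \<in> Basis" "x \<bullet> b = 0" for b
    proof (rule ccontr)
      assume "xb \<bullet> b \<noteq> 0"
      with xb that have "m \<le> xb \<bullet> b" by (intro m(2)) (auto simp: std_polyhedron_def)
      moreover have "\<bar>(x - xb) \<bullet> b\<bar> < m"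
        using Basis_le_norm[OF \<open>b \<in> Basis\<close>, of "x - xb"] \<open>dist x xb < m\<close> by (simp add: dist_norm)
      ultimately show False using \<open>x \<bullet> b = 0\<close> by (simp add: inner_diff_left)
    qed
    then show "x - xb \<in> face {b\<in>Basis. x \<bullet> b = 0}"
      using x xb f by (simp add: face_def std_polyhedron_def linear_diff inner_diff_left)
    fix n d assume "n \<in> normal_cone (std_polyhedron f c) x" "d \<in> face {b\<in>Basis. x \<bullet> b = 0}"
    then show "inner n d = 0"
      using std_polyhedron_normal_cone_orthogonal[OF f x] by (simp add: face_def)
  qed
  then have "\<forall>\<^sub>F x in nhds xb. x \<in> std_polyhedron f c \<longrightarrow> (\<exists>L\<in>face ` Pow Basis. x - xb \<in> L \<and>
      (\<forall>n\<in>normal_cone (std_polyhedron f c) x. \<forall>d\<in>L. inner n d = 0))"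
    using m(1) unfolding eventually_nhds_metric by blast
  then show "\<exists>Ls. finite Ls \<and> (\<forall>L\<in>Ls. subspace L) \<and> (\<forall>\<^sub>F x in nhds xb. x \<in> std_polyhedron f c \<longrightarrow>
      (\<exists>L\<in>Ls. x - xb \<in> L \<and> (\<forall>n\<in>normal_cone (std_polyhedron f c) x. \<forall>d\<in>L. inner n d = 0)))"
    using \<open>finite (face ` Pow Basis)\<close> \<open>\<forall>L\<in>face ` Pow Basis. subspace L\<close> by blast
qed

section \<open>Finite length under sufficient decrease\<close>

lemma decseq_LIMSEQ_of_subseq:
  fixes Y :: "nat \<Rightarrow> real"
  assumes dec: "decseq Y" and r: "strict_mono r" and lim: "(Y \<circ> r) \<longlonglongrightarrow> v"
  shows "Y \<longlonglongrightarrow> v"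
proof -
  have "v \<le> Y k" for k
  proof (rule LIMSEQ_le_const2[OF lim], intro exI allI impI)
    fix n assume "k \<le> n"
    then show "(Y \<circ> r) n \<le> Y k"
      using seq_suble[OF r, of n] decseqD[OF dec] by simp
  qed
  then obtain L where "Y \<longlonglongrightarrow> L" using decseq_convergent[OF dec] by blast
  moreover have "L = v" using LIMSEQ_unique[OF LIMSEQ_subseq_LIMSEQ[OF \<open>Y \<longlonglongrightarrow> L\<close> r] lim] .
  ultimately show ?thesis by simp
qed

lemma LIMSEQ_of_summable_steps:
  fixes y :: "nat \<Rightarrow> 'a::banach"
  assumes "summable (\<lambda>k. norm (y (Suc k) - y k))" and r: "strict_mono r" and lim: "(y \<circ> r) \<longlonglongrightarrow> l"
  shows "y \<longlonglongrightarrow> l"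
proof -
  have "(\<lambda>n. \<Sum>k<n. y (Suc k) - y k) \<longlonglongrightarrow> (\<Sum>k. y (Suc k) - y k)"
    using summable_LIMSEQ summable_norm_cancel[OF assms(1)] by blast
  then have "(\<lambda>n. y 0 + (\<Sum>k<n. y (Suc k) - y k)) \<longlonglongrightarrow> y 0 + (\<Sum>k. y (Suc k) - y k)"
    by (intro tendsto_add tendsto_const)
  then have y_lim: "y \<longlonglongrightarrow> y 0 + (\<Sum>k. y (Suc k) - y k)" by (simp add: sum_lessThan_telescope)
  then show ?thesis using LIMSEQ_unique[OF LIMSEQ_subseq_LIMSEQ[OF y_lim r] lim] by simp
qed

lemma lojasiewicz_step_inequality:
  fixes a c D0 D1 F1 F2 v :: real
  assumes "a > 0" "c \<ge> 0" "D0 \<ge> 0" "D1 \<ge> 0" "v \<le> F2"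
    and decrease: "F2 + a * D1^2 \<le> F1" and lojasiewicz: "F1 - v \<le> c * D0^2"
  shows "2 * D1 \<le> D0 + 2 * sqrt c / a * (sqrt (F1 - v) - sqrt (F2 - v))"
proof -
  define e0 e1 where "e0 = sqrt (F1 - v)" and "e1 = sqrt (F2 - v)"
  define M where "M = 2 * sqrt c / a * (e0 - e1)"
  have "F2 \<le> F1" using decrease \<open>a > 0\<close> by (smt (verit) mult_nonneg_nonneg zero_le_power2)
  then have "0 \<le> e1" "e1 \<le> e0" "M \<ge> 0" using assms by (simp_all add: e0_def e1_def M_def)
  have "e0 \<le> sqrt c * D0"
    using real_sqrt_le_mono[OF lojasiewicz] \<open>D0 \<ge> 0\<close> by (simp add: e0_def real_sqrt_mult)
  have "a * D1^2 \<le> e0^2 - e1^2" using decrease \<open>v \<le> F2\<close> \<open>F2 \<le> F1\<close> by (simp add: e0_def e1_def)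
  also have "\<dots> = (e0 + e1) * (e0 - e1)" by (simp add: power2_eq_square algebra_simps)
  also have "\<dots> \<le> 2 * (sqrt c * D0) * (e0 - e1)"
    using \<open>0 \<le> e1\<close> \<open>e1 \<le> e0\<close> \<open>e0 \<le> sqrt c * D0\<close> by (intro mult_right_mono) auto
  finally have "D1^2 \<le> D0 * M"
    using \<open>a > 0\<close> by (simp add: M_def field_simps)
  then have "(2 * D1)^2 \<le> (D0 + M)^2"
    using zero_le_power2[of "D0 - M"] by (simp add: power2_eq_square algebra_simps)
  then show ?thesis
    using power2_le_imp_le[of "2 * D1" "D0 + M"] \<open>M \<ge> 0\<close> \<open>D0 \<ge> 0\<close> by (simp add: M_def e0_def e1_def)
qed

lemma sum_le_of_contracting_steps:
  fixes D e :: "nat \<Rightarrow> real"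
  assumes "K \<le> n" and "\<And>k. K \<le> k \<Longrightarrow> k < n \<Longrightarrow> 2 * D (Suc k) \<le> D k + M * (e k - e (Suc k))"
  shows "(\<Sum>i\<in>{K..<n}. D (Suc i)) + D n + M * e n \<le> D K + M * e K"
  using assms
proof (induction n rule: dec_induct)
  case (step n)
  then have "(\<Sum>i\<in>{K..<n}. D (Suc i)) + D n + M * e n \<le> D K + M * e K"
    and "2 * D (Suc n) \<le> D n + M * (e n - e (Suc n))"
    by simp_all
  then show ?case using step.hyps by (simp add: algebra_simps)
qed simp

lemma summable_of_trapped_contracting_steps:
  fixes y :: "nat \<Rightarrow> 'a::real_normed_vector" and D e :: "nat \<Rightarrow> real"
  assumes D: "\<And>k. D k = norm (y (Suc k) - y k)" and e: "\<And>k. e k \<ge> 0" and "M \<ge> 0"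
    and step: "\<And>k. K \<le> k \<Longrightarrow> dist (y (Suc k)) xb < \<delta> \<Longrightarrow> 2 * D (Suc k) \<le> D k + M * (e k - e (Suc k))"
    and start: "dist (y (Suc K)) xb + D K + M * e K < \<delta>"
  shows "summable D"
proof -
  have bound: "(\<Sum>i\<in>{K..<n}. D (Suc i)) + D n + M * e n \<le> D K + M * e K \<and> dist (y (Suc n)) xb < \<delta>"
    if "K \<le> n" for n
    using that
  proof (induction n rule: less_induct)
    case (less n)
    have bound_n: "(\<Sum>i\<in>{K..<n}. D (Suc i)) + D n + M * e n \<le> D K + M * e K"
    proof (rule sum_le_of_contracting_steps[OF less.prems])
      fix k assume "K \<le> k" "k < n"
      then have "dist (y (Suc k)) xb < \<delta>" using less.IH by blast
      then show "2 * D (Suc k) \<le> D k + M * (e k - e (Suc k))" using step \<open>K \<le> k\<close> by blast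
    qed
    have "dist (y (Suc n)) (y (Suc K)) = norm (\<Sum>i\<in>{K..<n}. y (Suc (Suc i)) - y (Suc i))"
      using sum_Suc_diff'[OF less.prems, of "\<lambda>i. y (Suc i)"] by (simp add: dist_norm)
    also have "\<dots> \<le> (\<Sum>i\<in>{K..<n}. D (Suc i))" unfolding D by (rule norm_sum)
    moreover have "0 \<le> D n" "0 \<le> M * e n" using D[of n] e[of n] \<open>M \<ge> 0\<close> by simp_all
    ultimately have "dist (y (Suc n)) (y (Suc K)) \<le> D K + M * e K"
      using bound_n by linarith
    then show ?case
      using bound_n start dist_triangle[of "y (Suc n)" xb "y (Suc K)"] by linarith
  qed
  have "(\<Sum>i<n. D (i + Suc K)) \<le> D K + M * e K" for n
  proof -
    have "(\<Sum>i<n. D (i + Suc K)) = (\<Sum>i\<in>{K..<n + K}. D (Suc i))"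
      using sum.shift_bounds_nat_ivl[of "\<lambda>i. D (Suc i)" 0 K n] by (simp add: lessThan_atLeast0)
    moreover have "0 \<le> D (n + K)" "0 \<le> M * e (n + K)" using D e \<open>M \<ge> 0\<close> by simp_all
    ultimately show ?thesis using conjunct1[OF bound[of "n + K"]] by simp
  qed
  then have "summable (\<lambda>i. D (i + Suc K))"
    using D by (intro summableI_nonneg_bounded) auto
  then show ?thesis by (rule summable_iff_shift[THEN iffD1])
qed

lemma sufficient_decrease_limits:
  fixes y :: "nat \<Rightarrow> 'a::real_normed_vector" and F :: "'a \<Rightarrow> real"
  assumes "a > 0" and decrease: "\<And>k. F (y (Suc k)) + a * (norm (y (Suc k) - y k))^2 \<le> F (y k)"
    and r: "strict_mono r" and lim: "(y \<circ> r) \<longlonglongrightarrow> xb" and cont: "isCont F xb"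
  shows "(\<lambda>k. F (y k)) \<longlonglongrightarrow> F xb" "\<And>k. F xb \<le> F (y k)"
    and "(\<lambda>k. norm (y (Suc k) - y k)) \<longlonglongrightarrow> 0"
proof -
  have dec: "decseq (\<lambda>k. F (y k))"
  proof (rule decseq_SucI)
    fix k
    have "0 \<le> a * (norm (y (Suc k) - y k))^2" using \<open>a > 0\<close> by simp
    then show "F (y (Suc k)) \<le> F (y k)" using decrease[of k] by linarith
  qed
  show F_lim: "(\<lambda>k. F (y k)) \<longlonglongrightarrow> F xb"
    using decseq_LIMSEQ_of_subseq[OF dec r] isCont_tendsto_compose[OF cont lim] by (simp add: o_def)
  then show "\<And>k. F xb \<le> F (y k)" using decseq_ge[OF dec] by blast
  have "(\<lambda>k. (F (y k) - F (y (Suc k))) / a) \<longlonglongrightarrow> (F xb - F xb) / a"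
    by (intro tendsto_divide tendsto_diff F_lim LIMSEQ_Suc[OF F_lim] tendsto_const) (use \<open>a > 0\<close> in simp)
  then have sqrt_lim: "(\<lambda>k. sqrt ((F (y k) - F (y (Suc k))) / a)) \<longlonglongrightarrow> 0"
    using tendsto_real_sqrt by fastforce
  have step_bound: "norm (y (Suc k) - y k) \<le> sqrt ((F (y k) - F (y (Suc k))) / a)" for k
    using decrease[of k] \<open>a > 0\<close> by (intro real_le_rsqrt) (simp add: field_simps)
  show "(\<lambda>k. norm (y (Suc k) - y k)) \<longlonglongrightarrow> 0"
    by (rule real_tendsto_sandwich[OF _ _ tendsto_const sqrt_lim]) (simp_all add: step_bound)
qed

lemma LIMSEQ_of_sufficient_decrease_lojasiewicz:
  fixes y :: "nat \<Rightarrow> 'a::banach" and F :: "'a \<Rightarrow> real"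
  assumes "a > 0" and decrease: "\<And>k. F (y (Suc k)) + a * (norm (y (Suc k) - y k))^2 \<le> F (y k)"
    and r: "strict_mono r" and lim: "(y \<circ> r) \<longlonglongrightarrow> xb" and cont: "isCont F xb"
    and "\<delta> > 0" "c \<ge> 0"
    and lojasiewicz: "\<And>k. dist (y (Suc k)) xb < \<delta> \<Longrightarrow>
      F (y (Suc k)) - F xb \<le> c * (norm (y (Suc k) - y k))^2"
  shows "y \<longlonglongrightarrow> xb"
proof -
  define D where "D k = norm (y (Suc k) - y k)" for k
  define e where "e k = sqrt (F (y (Suc k)) - F xb)" for k
  define M where "M = 2 * sqrt c / a"
  note limits = sufficient_decrease_limits[OF \<open>a > 0\<close> decrease r lim cont]
  have "e k \<ge> 0" for k using limits(2)[of "Suc k"] by (simp add: e_def)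
  have step: "2 * D (Suc k) \<le> D k + M * (e k - e (Suc k))" if "dist (y (Suc k)) xb < \<delta>" for k
    unfolding M_def e_def D_def
    by (rule lojasiewicz_step_inequality[OF \<open>a > 0\<close> \<open>c \<ge> 0\<close> _ _ limits(2) decrease lojasiewicz[OF that]])
      simp_all
  have "(\<lambda>j. dist (y (r j)) xb + 2 * D (r j) + M * e (r j)) \<longlonglongrightarrow> dist xb xb + 2 * 0 + M * 0"
  proof (intro tendsto_add tendsto_mult_left)
    show "(\<lambda>j. dist (y (r j)) xb) \<longlonglongrightarrow> dist xb xb"
      using lim by (intro tendsto_dist tendsto_const) (simp add: o_def)
    show "(\<lambda>j. D (r j)) \<longlonglongrightarrow> 0"
      using LIMSEQ_subseq_LIMSEQ[OF limits(3) r] by (simp add: D_def o_def)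
    have "(\<lambda>k. e k) \<longlonglongrightarrow> sqrt (F xb - F xb)"
      unfolding e_def by (intro tendsto_real_sqrt tendsto_diff LIMSEQ_Suc[OF limits(1)] tendsto_const)
    then show "(\<lambda>j. e (r j)) \<longlonglongrightarrow> 0"
      using LIMSEQ_subseq_LIMSEQ[OF _ r, of e] by (simp add: o_def)
  qed
  then obtain N where "dist (y (r N)) xb + 2 * D (r N) + M * e (r N) < \<delta>"
    using order_tendstoD(2)[of _ 0 sequentially \<delta>] \<open>\<delta> > 0\<close> by (force dest: eventually_happens')
  moreover have "dist (y (Suc (r N))) xb \<le> dist (y (r N)) xb + D (r N)"
    using dist_triangle[of "y (Suc (r N))" xb "y (r N)"] by (simp add: D_def dist_norm norm_minus_commute)
  ultimately have start: "dist (y (Suc (r N))) xb + D (r N) + M * e (r N) < \<delta>" by simp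
  have "M \<ge> 0" using \<open>a > 0\<close> \<open>c \<ge> 0\<close> by (simp add: M_def)
  have "summable D"
    by (rule summable_of_trapped_contracting_steps[where y = y and D = D and e = e and M = M
          and K = "r N" and xb = xb and \<delta> = \<delta>])
      (use step start \<open>M \<ge> 0\<close> \<open>\<And>k. e k \<ge> 0\<close> in \<open>auto simp: D_def\<close>)
  then show ?thesis unfolding D_def by (rule LIMSEQ_of_summable_steps[OF _ r lim])
qed

section \<open>Proximal alternating minimization\<close>

lemma normal_cone_limit:
  assumes "x \<longlonglongrightarrow> xl" "v \<longlonglongrightarrow> vl" "\<And>k. v k \<in> normal_cone S (x k)"
  shows "vl \<in> normal_cone S xl"
  unfolding normal_cone_def
proof (intro CollectI ballI)
  fix y assume "y \<in> S"
  have "(\<lambda>k. inner (v k) (y - x k)) \<longlonglongrightarrow> inner vl (y - xl)"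
    by (intro tendsto_inner tendsto_diff tendsto_const assms(1,2))
  moreover have "inner (v k) (y - x k) \<le> 0" for k
    using assms(3)[of k] \<open>y \<in> S\<close> by (simp add: normal_cone_def)
  ultimately show "inner vl (y - xl) \<le> 0" by (simp add: LIMSEQ_le_const2)
qed

lemma minimizer_of_quadratic_expansion:
  fixes g :: "'a::real_inner"
  assumes "convex S" "u \<in> S" and min: "\<forall>p\<in>S. \<psi> u \<le> \<psi> p"
    and expand: "\<And>p. \<psi> p = \<psi> u + inner g (p - u) + a * (norm (p - u))^2" and "a \<ge> 0"
  shows "- g \<in> normal_cone S u" and "\<And>p. p \<in> S \<Longrightarrow> \<psi> u + a * (norm (p - u))^2 \<le> \<psi> p"
proof -
  have first_order: "inner g (p - u) \<ge> 0" if "p \<in> S" for p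
  proof (rule ccontr)
    assume "\<not> inner g (p - u) \<ge> 0"
    then have neg: "inner g (p - u) < 0" by simp
    define N where "N = a * (norm (p - u))^2 + 1"
    have "N > 0" using \<open>a \<ge> 0\<close> by (simp add: N_def add_nonneg_pos)
    define t where "t = min 1 (- inner g (p - u) / (2 * N))"
    have t: "0 < t" "t \<le> 1" "t * N \<le> - inner g (p - u) / 2"
      using neg \<open>N > 0\<close> by (auto simp: t_def min_def field_simps)
    have "u + t *\<^sub>R (p - u) = (1 - t) *\<^sub>R u + t *\<^sub>R p" by (simp add: algebra_simps)
    then have "u + t *\<^sub>R (p - u) \<in> S"
      using \<open>convex S\<close> \<open>u \<in> S\<close> \<open>p \<in> S\<close> t by (simp add: convex_def)
    then have "\<psi> u \<le> \<psi> (u + t *\<^sub>R (p - u))" using min by blast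
    then have "0 \<le> t * inner g (p - u) + a * t^2 * (norm (p - u))^2"
      using expand[of "u + t *\<^sub>R (p - u)"] t(1) by (simp add: power_mult_distrib mult.assoc)
    also have "\<dots> \<le> t * (inner g (p - u) + t * N)"
      using t(1,2) \<open>a \<ge> 0\<close> by (simp add: N_def power2_eq_square algebra_simps)
    also have "\<dots> < 0"
      using t neg by (intro mult_pos_neg) auto
    finally show False by simp
  qed
  then show "- g \<in> normal_cone S u" by (simp add: normal_cone_def)
  show "\<psi> u + a * (norm (p - u))^2 \<le> \<psi> p" if "p \<in> S" for p
    using expand[of p] first_order[OF that] by simp
qed

text \<open>With A p = DX p DY, prox_coupling A \<rho> is f + \<rho>/2 \<parallel>\<pi> - w\<parallel>^2 and, for symmetric A,
  prox_coupling_grad A \<rho> is its gradient.\<close>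

definition prox_coupling :: "('a::real_inner \<Rightarrow> 'a) \<Rightarrow> real \<Rightarrow> 'a \<Rightarrow> 'a \<Rightarrow> real" where
  "prox_coupling A \<rho> p q = - inner (A p) q + \<rho> / 2 * (norm (p - q))^2"

definition prox_coupling_grad :: "('a::real_inner \<Rightarrow> 'a) \<Rightarrow> real \<Rightarrow> 'a \<times> 'a \<Rightarrow> 'a \<times> 'a" where
  "prox_coupling_grad A \<rho> x = (\<rho> *\<^sub>R (fst x - snd x) - A (snd x), \<rho> *\<^sub>R (snd x - fst x) - A (fst x))"

lemma linear_prox_coupling_grad: "linear A \<Longrightarrow> linear (prox_coupling_grad A \<rho>)"
  unfolding prox_coupling_grad_def by (rule linearI) (auto simp: linear_add linear_scale algebra_simps)

lemma prox_coupling_grad_symmetric: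
  assumes "\<And>x y. inner (A x) y = inner x (A y)"
  shows "inner (prox_coupling_grad A \<rho> x) y = inner x (prox_coupling_grad A \<rho> y)"
  using assms[of "snd x" "fst y"] assms[of "fst x" "snd y"]
  by (simp add: prox_coupling_grad_def inner_prod_def inner_diff_left inner_diff_right inner_commute
      algebra_simps)

lemma prox_coupling_quadratic_form:
  assumes "\<And>x y. inner (A x) y = inner x (A y)"
  shows "prox_coupling A \<rho> p q = inner (prox_coupling_grad A \<rho> (p, q)) (p, q) / 2"
  using assms[of q p]
  by (simp add: prox_coupling_def prox_coupling_grad_def inner_prod_def power2_norm_eq_inner
      inner_diff_left inner_diff_right inner_commute algebra_simps)

lemma prox_coupling_expand_fst:
  assumes "linear A" "\<And>x y. inner (A x) y = inner x (A y)"
  shows "prox_coupling A \<rho> p' q = prox_coupling A \<rho> p q + inner (fst (prox_coupling_grad A \<rho> (p, q))) (p' - p)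
    + \<rho> / 2 * (norm (p' - p))^2"
  using assms(2)[of p' q] assms(2)[of p q]
  by (simp add: prox_coupling_def prox_coupling_grad_def power2_norm_eq_inner inner_diff_left
      inner_diff_right inner_commute algebra_simps)

lemma prox_coupling_expand_snd:
  shows "prox_coupling A \<rho> p q' = prox_coupling A \<rho> p q + inner (snd (prox_coupling_grad A \<rho> (p, q))) (q' - q)
    + \<rho> / 2 * (norm (q' - q))^2"
  by (simp add: prox_coupling_def prox_coupling_grad_def power2_norm_eq_inner inner_diff_left
      inner_diff_right inner_commute algebra_simps)

lemma alternating_prox_normal:
  fixes A :: "'a::real_inner \<Rightarrow> 'a"
  assumes "linear A" "\<And>x y. inner (A x) y = inner x (A y)" "\<rho> > 0" "convex S" "convex T"
    and min1: "p' \<in> S \<and> (\<forall>p\<in>S. prox_coupling A \<rho> p' q \<le> prox_coupling A \<rho> p q)"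
    and min2: "q' \<in> T \<and> (\<forall>q''\<in>T. prox_coupling A \<rho> p' q' \<le> prox_coupling A \<rho> p' q'')"
  shows "(- fst (prox_coupling_grad A \<rho> (p', q)), - snd (prox_coupling_grad A \<rho> (p', q')))
      \<in> normal_cone (S \<times> T) (p', q')"
proof -
  have "\<rho> / 2 \<ge> 0" using \<open>\<rho> > 0\<close> by simp
  have "- fst (prox_coupling_grad A \<rho> (p', q)) \<in> normal_cone S p'"
    by (rule minimizer_of_quadratic_expansion(1)[where \<psi> = "\<lambda>p. prox_coupling A \<rho> p q" and a = "\<rho> / 2"])
      (use min1 prox_coupling_expand_fst[OF assms(1,2)] \<open>\<rho> / 2 \<ge> 0\<close> \<open>convex S\<close> in auto)
  moreover have "- snd (prox_coupling_grad A \<rho> (p', q')) \<in> normal_cone T q'"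
    by (rule minimizer_of_quadratic_expansion(1)[where \<psi> = "\<lambda>q. prox_coupling A \<rho> p' q" and a = "\<rho> / 2"])
      (use min2 prox_coupling_expand_snd \<open>\<rho> / 2 \<ge> 0\<close> \<open>convex T\<close> in auto)
  ultimately show ?thesis using normal_cone_Times[of p' S q' T] min1 min2 by simp
qed

lemma alternating_prox_decrease:
  fixes A :: "'a::real_inner \<Rightarrow> 'a"
  assumes "linear A" "\<And>x y. inner (A x) y = inner x (A y)" "\<rho> > 0" "convex S" "convex T"
    and "p \<in> S" "q \<in> T"
    and min1: "p' \<in> S \<and> (\<forall>p''\<in>S. prox_coupling A \<rho> p' q \<le> prox_coupling A \<rho> p'' q)"
    and min2: "q' \<in> T \<and> (\<forall>q''\<in>T. prox_coupling A \<rho> p' q' \<le> prox_coupling A \<rho> p' q'')"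
  shows "prox_coupling A \<rho> p' q' + \<rho> / 2 * (norm ((p', q') - (p, q)))^2 \<le> prox_coupling A \<rho> p q"
proof -
  have "\<rho> / 2 \<ge> 0" using \<open>\<rho> > 0\<close> by simp
  have "prox_coupling A \<rho> p' q' + \<rho> / 2 * (norm (q - q'))^2 \<le> prox_coupling A \<rho> p' q"
    by (rule minimizer_of_quadratic_expansion(2)[where \<psi> = "\<lambda>q. prox_coupling A \<rho> p' q" and a = "\<rho> / 2"])
      (use min2 prox_coupling_expand_snd \<open>\<rho> / 2 \<ge> 0\<close> \<open>convex T\<close> \<open>q \<in> T\<close> in auto)
  moreover have "prox_coupling A \<rho> p' q + \<rho> / 2 * (norm (p - p'))^2 \<le> prox_coupling A \<rho> p q"
    by (rule minimizer_of_quadratic_expansion(2)[where \<psi> = "\<lambda>p. prox_coupling A \<rho> p q" and a = "\<rho> / 2"])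
      (use min1 prox_coupling_expand_fst[OF assms(1,2)] \<open>\<rho> / 2 \<ge> 0\<close> \<open>convex S\<close> \<open>p \<in> S\<close> in auto)
  moreover have "(norm ((p', q') - (p, q)))^2 = (norm (p - p'))^2 + (norm (q - q'))^2"
    by (simp add: norm_Pair norm_minus_commute)
  ultimately show ?thesis by (simp add: algebra_simps)
qed

lemma alternating_prox_residual:
  assumes "linear A" "\<And>x. norm (A x) \<le> B * norm x" "B \<ge> 0" "\<rho> \<ge> 0"
  shows "norm (prox_coupling_grad A \<rho> (p', q') +
      (- fst (prox_coupling_grad A \<rho> (p', q)), - snd (prox_coupling_grad A \<rho> (p', q'))))
    \<le> (B + \<rho>) * norm ((p', q') - (p, q))"
proof -
  define u where "u = q' - q"
  have "prox_coupling_grad A \<rho> (p', q') +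
      (- fst (prox_coupling_grad A \<rho> (p', q)), - snd (prox_coupling_grad A \<rho> (p', q')))
    = - (\<rho> *\<^sub>R u + A u, 0)"
    using assms(1) by (simp add: prox_coupling_grad_def u_def linear_diff algebra_simps)
  then have "norm (prox_coupling_grad A \<rho> (p', q') +
      (- fst (prox_coupling_grad A \<rho> (p', q)), - snd (prox_coupling_grad A \<rho> (p', q'))))
    = norm (\<rho> *\<^sub>R u + A u)"
    by (simp only: norm_minus_cancel) (simp add: norm_Pair)
  also have "\<dots> \<le> \<rho> * norm u + B * norm u"
    using norm_triangle_ineq[of "\<rho> *\<^sub>R u" "A u"] assms(2)[of u] \<open>\<rho> \<ge> 0\<close> by simp
  also have "\<dots> \<le> (B + \<rho>) * norm ((p', q') - (p, q))"
    using assms(3,4) mult_left_mono[of "norm u" "norm ((p', q') - (p, q))" "B + \<rho>"]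
    by (simp add: u_def norm_snd_le algebra_simps)
  finally show ?thesis .
qed

lemma alternating_prox_limit_critical:
  fixes A :: "'a::euclidean_space \<Rightarrow> 'a"
  assumes "linear A" and lim: "(\<lambda>k. (\<pi> k, w k)) \<longlonglongrightarrow> (pb, wb)"
    and normal: "\<And>k. (- fst (prox_coupling_grad A \<rho> (\<pi> (Suc k), w k)),
        - snd (prox_coupling_grad A \<rho> (\<pi> (Suc k), w (Suc k)))) \<in> normal_cone (S \<times> T) (\<pi> (Suc k), w (Suc k))"
  shows "- prox_coupling_grad A \<rho> (pb, wb) \<in> normal_cone (S \<times> T) (pb, wb)"
proof -
  have "\<pi> \<longlonglongrightarrow> pb" "w \<longlonglongrightarrow> wb" using tendsto_fst[OF lim] tendsto_snd[OF lim] by simp_all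
  then have lim1: "(\<lambda>k. (\<pi> (Suc k), w k)) \<longlonglongrightarrow> (pb, wb)"
    and lim2: "(\<lambda>k. (\<pi> (Suc k), w (Suc k))) \<longlonglongrightarrow> (pb, wb)"
    by (auto intro!: tendsto_Pair LIMSEQ_Suc)
  have "bounded_linear (prox_coupling_grad A \<rho>)"
    using linear_prox_coupling_grad[OF assms(1), of \<rho>] by (simp add: linear_conv_bounded_linear)
  from tendsto_Pair[OF tendsto_minus[OF tendsto_fst[OF bounded_linear.tendsto[OF this lim1]]]
      tendsto_minus[OF tendsto_snd[OF bounded_linear.tendsto[OF this lim2]]]]
  have "(- fst (prox_coupling_grad A \<rho> (pb, wb)), - snd (prox_coupling_grad A \<rho> (pb, wb)))
      \<in> normal_cone (S \<times> T) (pb, wb)"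
    by (rule normal_cone_limit[OF lim2 _ normal])
  moreover have "(- fst v, - snd v) = - v" for v :: "'a \<times> 'a" by (simp add: prod_eq_iff)
  ultimately show ?thesis by simp
qed

lemma alternating_prox_LIMSEQ:
  fixes A :: "'a::euclidean_space \<Rightarrow> 'a" and \<pi> w :: "nat \<Rightarrow> 'a"
  assumes linA: "linear A" and symA: "\<And>x y. inner (A x) y = inner x (A y)" and "\<rho> > 0"
    and S: "convex S" "locally_face_flat S" and T: "convex T" "locally_face_flat T"
    and min1: "\<And>k. \<pi> (Suc k) \<in> S \<and>
      (\<forall>p\<in>S. prox_coupling A \<rho> (\<pi> (Suc k)) (w k) \<le> prox_coupling A \<rho> p (w k))"
    and min2: "\<And>k. w (Suc k) \<in> T \<and>
      (\<forall>q\<in>T. prox_coupling A \<rho> (\<pi> (Suc k)) (w (Suc k)) \<le> prox_coupling A \<rho> (\<pi> (Suc k)) q)"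
    and xb: "xb \<in> S \<times> T" and r: "strict_mono r" and lim: "((\<lambda>k. (\<pi> (Suc k), w (Suc k))) \<circ> r) \<longlonglongrightarrow> xb"
  shows "(\<lambda>k. (\<pi> k, w k)) \<longlonglongrightarrow> xb"
proof -
  define G where "G = prox_coupling_grad A \<rho>"
  define F where "F x = inner (G x) x / 2" for x
  define y where "y k = (\<pi> (Suc k), w (Suc k))" for k
  define n where "n k = (- fst (G (\<pi> (Suc k), w k)), - snd (G (\<pi> (Suc k), w (Suc k))))" for k
  have y_in: "y k \<in> S \<times> T" for k using min1 min2 by (simp add: y_def)
  have normal: "n k \<in> normal_cone (S \<times> T) (\<pi> (Suc k), w (Suc k))" for k
    unfolding n_def G_def by (rule alternating_prox_normal[OF linA symA \<open>\<rho> > 0\<close> S(1) T(1) min1 min2])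
  have decrease: "F (y (Suc k)) + \<rho> / 2 * (norm (y (Suc k) - y k))^2 \<le> F (y k)" for k
    using alternating_prox_decrease[OF linA symA \<open>\<rho> > 0\<close> S(1) T(1) _ _ min1[of "Suc k"] min2[of "Suc k"]]
      y_in[of k] by (simp add: y_def F_def G_def prox_coupling_quadratic_form[OF symA])
  obtain B where B: "B > 0" "\<And>x. norm (A x) \<le> B * norm x"
    using linear_bounded_pos[OF linA] by blast
  have linG: "linear G" and symG: "\<And>x z. inner (G x) z = inner x (G z)"
    unfolding G_def using linear_prox_coupling_grad[OF linA] prox_coupling_grad_symmetric[OF symA] by blast+
  obtain c where "c \<ge> 0" and "\<forall>\<^sub>F x in nhds xb. x \<in> S \<times> T \<longrightarrow>
      (\<forall>m\<in>normal_cone (S \<times> T) x. F x - F xb \<le> c * (norm (G x + m))^2)"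
    unfolding F_def by (rule quadratic_lojasiewicz[OF linG symG locally_face_flat_Times[OF S(2) T(2)] xb])
  then obtain \<delta> where "\<delta> > 0" and lojasiewicz: "\<And>x m. dist x xb < \<delta> \<Longrightarrow> x \<in> S \<times> T \<Longrightarrow>
      m \<in> normal_cone (S \<times> T) x \<Longrightarrow> F x - F xb \<le> c * (norm (G x + m))^2"
    unfolding eventually_nhds_metric by blast
  have "y \<longlonglongrightarrow> xb"
  proof (rule LIMSEQ_of_sufficient_decrease_lojasiewicz[OF _ decrease r lim[folded y_def] _ \<open>\<delta> > 0\<close>])
    show "\<rho> / 2 > 0" "c * (B + \<rho>)^2 \<ge> 0" using \<open>\<rho> > 0\<close> \<open>c \<ge> 0\<close> by simp_all
    have "isCont G xb" using linG by (simp add: linear_continuous_at linear_conv_bounded_linear)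
    then show "isCont F xb" unfolding F_def by (intro continuous_intros) simp_all
    fix k assume "dist (y (Suc k)) xb < \<delta>"
    then have "F (y (Suc k)) - F xb \<le> c * (norm (G (y (Suc k)) + n (Suc k)))^2"
      using lojasiewicz y_in normal by (simp add: y_def)
    also have "\<dots> \<le> c * ((B + \<rho>) * norm (y (Suc k) - y k))^2"
      using alternating_prox_residual[OF linA B(2)] B(1) \<open>\<rho> > 0\<close> \<open>c \<ge> 0\<close>
      by (intro mult_left_mono power_mono) (simp_all add: G_def n_def y_def)
    finally show "F (y (Suc k)) - F xb \<le> c * (B + \<rho>)^2 * (norm (y (Suc k) - y k))^2"
      by (simp add: power_mult_distrib)
  qed
  then show ?thesis unfolding y_def by (rule LIMSEQ_imp_Suc)
qed

lemma alternating_prox_converges: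
  fixes A :: "'a::euclidean_space \<Rightarrow> 'a" and \<pi> w :: "nat \<Rightarrow> 'a"
  assumes linA: "linear A" and symA: "\<And>x y. inner (A x) y = inner x (A y)" and "\<rho> > 0"
    and S: "convex S" "compact S" "locally_face_flat S"
    and T: "convex T" "compact T" "locally_face_flat T"
    and min1: "\<And>k. \<pi> (Suc k) \<in> S \<and>
      (\<forall>p\<in>S. prox_coupling A \<rho> (\<pi> (Suc k)) (w k) \<le> prox_coupling A \<rho> p (w k))"
    and min2: "\<And>k. w (Suc k) \<in> T \<and>
      (\<forall>q\<in>T. prox_coupling A \<rho> (\<pi> (Suc k)) (w (Suc k)) \<le> prox_coupling A \<rho> (\<pi> (Suc k)) q)"
  shows "\<exists>pb wb. ((\<lambda>k. (\<pi> k, w k)) \<longlongrightarrow> (pb, wb)) sequentially \<and> pb \<in> S \<and> wb \<in> T \<and>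
    - prox_coupling_grad A \<rho> (pb, wb) \<in> normal_cone S pb \<times> normal_cone T wb"
proof -
  have "\<forall>k. (\<pi> (Suc k), w (Suc k)) \<in> S \<times> T" using min1 min2 by blast
  then obtain xb r where xb: "xb \<in> S \<times> T" and "strict_mono r"
    and "((\<lambda>k. (\<pi> (Suc k), w (Suc k))) \<circ> r) \<longlonglongrightarrow> xb"
    by (rule seq_compactE[OF compact_imp_seq_compact[OF compact_Times[OF S(2) T(2)]]])
  from alternating_prox_LIMSEQ[OF linA symA \<open>\<rho> > 0\<close> S(1,3) T(1,3) min1 min2 this]
  obtain pb wb where conv: "(\<lambda>k. (\<pi> k, w k)) \<longlonglongrightarrow> (pb, wb)" and pw: "xb = (pb, wb)"
    by (cases xb) simp
  have "- prox_coupling_grad A \<rho> (pb, wb) \<in> normal_cone (S \<times> T) (pb, wb)"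
    using alternating_prox_limit_critical[OF linA conv]
      alternating_prox_normal[OF linA symA \<open>\<rho> > 0\<close> S(1) T(1) min1 min2] by blast
  with conv xb normal_cone_Times[of pb S wb T] show ?thesis
    unfolding pw by (intro exI[of _ pb] exI[of _ wb]) simp
qed

section \<open>The Gromov-Wasserstein problem\<close>

lemma nonneg_entries_iff_Basis:
  fixes p :: "real^'m^'n"
  shows "(\<forall>i j. 0 \<le> p $ i $ j) \<longleftrightarrow> (\<forall>b\<in>Basis. 0 \<le> p \<bullet> b)"
  by (auto simp: Basis_vec_def inner_axis)

lemma C1_eq_std_polyhedron: "C1 \<mu> = std_polyhedron (\<lambda>p. p *v (\<chi> j. 1)) \<mu>"
  by (simp add: C1_def std_polyhedron_def nonneg_entries_iff_Basis)

lemma C2_eq_std_polyhedron: "C2 \<nu> = std_polyhedron (\<lambda>p. transpose p *v (\<chi> i. 1)) \<nu>"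
  by (simp add: C2_def std_polyhedron_def nonneg_entries_iff_Basis)

lemma linear_row_sums: "linear (\<lambda>p::real^'m^'n. p *v (\<chi> j. 1))"
  by (rule linearI) (simp_all add: vec_eq_iff matrix_vector_mult_def sum.distrib sum_distrib_left)

lemma linear_column_sums: "linear (\<lambda>p::real^'m^'n. transpose p *v (\<chi> i. 1))"
  by (rule linearI)
    (simp_all add: vec_eq_iff matrix_vector_mult_def transpose_def sum.distrib sum_distrib_left)

lemma norm_le_sum_entries: "norm (p::real^'m^'n) \<le> (\<Sum>i\<in>UNIV. \<Sum>j\<in>UNIV. \<bar>p $ i $ j\<bar>)"
proof -
  have "norm p \<le> (\<Sum>i\<in>UNIV. norm (p $ i))"
    unfolding norm_vec_def by (rule L2_set_le_sum) simp
  also have "\<dots> \<le> (\<Sum>i\<in>UNIV. \<Sum>j\<in>UNIV. \<bar>p $ i $ j\<bar>)"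
    by (intro sum_mono norm_le_l1_cart)
  finally show ?thesis .
qed

lemma C1_subset_cball:
  assumes "prob_vec \<mu>"
  shows "C1 \<mu> \<subseteq> cball 0 1"
proof
  fix p assume p: "p \<in> C1 \<mu>"
  have "norm p \<le> (\<Sum>i\<in>UNIV. \<Sum>j\<in>UNIV. p $ i $ j)"
    using norm_le_sum_entries[of p] p by (simp add: C1_def)
  also have "\<dots> = (\<Sum>i\<in>UNIV. (p *v (\<chi> j. 1)) $ i)" by (simp add: matrix_vector_mult_def)
  also have "\<dots> = (\<Sum>i\<in>UNIV. \<mu> $ i)" using p by (simp add: C1_def)
  finally show "p \<in> cball 0 1" using assms by (simp add: prob_vec_def)
qed

lemma C2_subset_cball:
  assumes "prob_vec \<nu>"
  shows "C2 \<nu> \<subseteq> cball 0 1"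
proof
  fix p assume p: "p \<in> C2 \<nu>"
  have "norm p \<le> (\<Sum>i\<in>UNIV. \<Sum>j\<in>UNIV. p $ i $ j)"
    using norm_le_sum_entries[of p] p by (simp add: C2_def)
  also have "\<dots> = (\<Sum>j\<in>UNIV. \<Sum>i\<in>UNIV. p $ i $ j)" by (rule sum.swap)
  also have "\<dots> = (\<Sum>j\<in>UNIV. (transpose p *v (\<chi> i. 1)) $ j)"
    by (simp add: matrix_vector_mult_def transpose_def)
  also have "\<dots> = (\<Sum>j\<in>UNIV. \<nu> $ j)" using p by (simp add: C2_def)
  finally show "p \<in> cball 0 1" using assms by (simp add: prob_vec_def)
qed

lemma inner_eq_trace:
  fixes M q :: "real^'m^'n"
  shows "inner M q = trace (M ** transpose q)"
  by (simp add: inner_vec_def trace_def matrix_matrix_mult_def transpose_def)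

lemma gw_obj_eq_inner: "gw_obj DX DY p q = - inner (DX ** p ** DY) q"
  by (simp add: gw_obj_def inner_eq_trace)

lemma linear_two_sided_mult: "linear (\<lambda>p::real^'m^'n. (DX::real^'n^'n) ** p ** (DY::real^'m^'m))"
  by (rule linearI)
    (simp_all add: matrix_add_ldistrib matrix_scalar_ac scalar_matrix_assoc[symmetric]
      matrix_matrix_mult_def vec_eq_iff sum.distrib algebra_simps sum_distrib_left)

lemma two_sided_mult_symmetric:
  fixes DX :: "real^'n^'n" and DY :: "real^'m^'m" and p q :: "real^'m^'n"
  assumes "transpose DX = DX" "transpose DY = DY"
  shows "inner (DX ** p ** DY) q = inner p (DX ** q ** DY)"
proof -
  have "inner p (DX ** q ** DY) = trace (p ** (DY ** transpose q ** DX))"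
    using assms by (simp add: inner_eq_trace matrix_transpose_mul matrix_mul_assoc)
  also have "\<dots> = trace (DX ** (p ** DY ** transpose q))"
    using trace_mul_sym[of "p ** DY ** transpose q" DX] by (simp add: matrix_mul_assoc)
  also have "\<dots> = inner (DX ** p ** DY) q"
    by (simp add: inner_eq_trace matrix_mul_assoc)
  finally show ?thesis by simp
qed

lemma gw_obj_has_derivative:
  fixes DX :: "real^'n^'n" and DY :: "real^'m^'m" and pb wb :: "real^'m^'n"
  assumes "transpose DX = DX" "transpose DY = DY"
  shows "((\<lambda>(p, q). gw_obj DX DY p q) has_derivative
           (\<lambda>h. inner (- (DX ** wb ** DY), - (DX ** pb ** DY)) h)) (at (pb, wb))"
proof -
  define A where "A = (\<lambda>p::real^'m^'n. DX ** p ** DY)"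
  have "bounded_linear A" using linear_two_sided_mult by (simp add: A_def linear_conv_bounded_linear)
  then have "((\<lambda>x. - inner (A (fst x)) (snd x)) has_derivative
      (\<lambda>h. - (inner (A pb) (snd h) + inner (A (fst h)) wb))) (at (pb, wb))"
    by (auto intro!: derivative_eq_intros bounded_linear.has_derivative[of A])
  moreover have "(\<lambda>(p, q). gw_obj DX DY p q) = (\<lambda>x. - inner (A (fst x)) (snd x))"
    by (auto simp: A_def gw_obj_eq_inner)
  moreover have "- (inner (A pb) (snd h) + inner (A (fst h)) wb)
      = inner (- (DX ** wb ** DY), - (DX ** pb ** DY)) h" for h
    using two_sided_mult_symmetric[OF assms, of "fst h" wb]
    by (simp add: A_def inner_prod_def inner_commute)
  ultimately show ?thesis by simp
qed

lemma C1_convex_compact_face_flat: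
  assumes "prob_vec \<mu>"
  shows "convex (C1 \<mu>)" "compact (C1 \<mu>)" "locally_face_flat (C1 \<mu>)"
proof -
  have "closed (C1 \<mu>)"
    unfolding C1_eq_std_polyhedron by (rule closed_std_polyhedron[OF linear_row_sums])
  then show "compact (C1 \<mu>)"
    using bounded_subset[OF bounded_cball C1_subset_cball[OF assms]] by (simp add: compact_eq_bounded_closed)
  show "convex (C1 \<mu>)"
    unfolding C1_eq_std_polyhedron by (rule convex_std_polyhedron[OF linear_row_sums])
  show "locally_face_flat (C1 \<mu>)"
    unfolding C1_eq_std_polyhedron by (rule locally_face_flat_std_polyhedron[OF linear_row_sums])
qed

lemma C2_convex_compact_face_flat:
  assumes "prob_vec \<nu>"
  shows "convex (C2 \<nu>)" "compact (C2 \<nu>)" "locally_face_flat (C2 \<nu>)"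
proof -
  have "closed (C2 \<nu>)"
    unfolding C2_eq_std_polyhedron by (rule closed_std_polyhedron[OF linear_column_sums])
  then show "compact (C2 \<nu>)"
    using bounded_subset[OF bounded_cball C2_subset_cball[OF assms]] by (simp add: compact_eq_bounded_closed)
  show "convex (C2 \<nu>)"
    unfolding C2_eq_std_polyhedron by (rule convex_std_polyhedron[OF linear_column_sums])
  show "locally_face_flat (C2 \<nu>)"
    unfolding C2_eq_std_polyhedron by (rule locally_face_flat_std_polyhedron[OF linear_column_sums])
qed

theorem theorem2:
  fixes \<mu> :: "real^'n" and \<nu> :: "real^'m"
    and DX :: "real^'n^'n" and DY :: "real^'m^'m"
    and \<rho> :: real
    and \<pi> w :: "nat \<Rightarrow> real^'m^'n"
  assumes "prob_vec \<mu>" and "prob_vec \<nu>"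
    and "transpose DX = DX" and "transpose DY = DY"
    and "\<rho> > 0"
    and "\<And>k. \<pi> (Suc k) \<in> C1 \<mu> \<and>
           (\<forall>p\<in>C1 \<mu>. gw_obj DX DY (\<pi> (Suc k)) (w k) + \<rho>/2 * (norm (\<pi> (Suc k) - w k))^2
                     \<le> gw_obj DX DY p (w k) + \<rho>/2 * (norm (p - w k))^2)"
    and "\<And>k. w (Suc k) \<in> C2 \<nu> \<and>
           (\<forall>q\<in>C2 \<nu>. gw_obj DX DY (\<pi> (Suc k)) (w (Suc k)) + \<rho>/2 * (norm (w (Suc k) - \<pi> (Suc k)))^2
                     \<le> gw_obj DX DY (\<pi> (Suc k)) q + \<rho>/2 * (norm (q - \<pi> (Suc k)))^2)"
  shows "\<exists>pb wb. ((\<lambda>k. (\<pi> k, w k)) \<longlongrightarrow> (pb, wb)) sequentially \<and>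
           critical_F (\<lambda>(p, q). gw_obj DX DY p q) (C1 \<mu>) (C2 \<nu>) \<rho> pb wb"
proof -
  define A where "A = (\<lambda>p::real^'m^'n. DX ** p ** DY)"
  have linA: "linear A" and symA: "\<And>x y. inner (A x) y = inner x (A y)"
    unfolding A_def using linear_two_sided_mult two_sided_mult_symmetric[OF assms(3,4)] by blast+
  have coupling: "prox_coupling A \<rho> p q = gw_obj DX DY p q + \<rho> / 2 * (norm (p - q))^2" for p q
    by (simp add: prox_coupling_def A_def gw_obj_eq_inner)
  have S: "convex (C1 \<mu>)" "compact (C1 \<mu>)" "locally_face_flat (C1 \<mu>)"
    using C1_convex_compact_face_flat[OF assms(1)] by blast+
  have T: "convex (C2 \<nu>)" "compact (C2 \<nu>)" "locally_face_flat (C2 \<nu>)"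
    using C2_convex_compact_face_flat[OF assms(2)] by blast+
  obtain pb wb where conv: "((\<lambda>k. (\<pi> k, w k)) \<longlongrightarrow> (pb, wb)) sequentially" and "pb \<in> C1 \<mu>" "wb \<in> C2 \<nu>"
    and crit: "- prox_coupling_grad A \<rho> (pb, wb) \<in> normal_cone (C1 \<mu>) pb \<times> normal_cone (C2 \<nu>) wb"
    using alternating_prox_converges[OF linA symA assms(5) S T, of \<pi> w] assms(6,7)
    by (auto simp: coupling norm_minus_commute)
  have "critical_F (\<lambda>(p, q). gw_obj DX DY p q) (C1 \<mu>) (C2 \<nu>) \<rho> pb wb"
    unfolding critical_F_def
  proof (intro conjI exI)
    show "((\<lambda>(p, q). gw_obj DX DY p q) has_derivative (\<lambda>h. inner (- A wb, - A pb) h)) (at (pb, wb))"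
      unfolding A_def by (rule gw_obj_has_derivative[OF assms(3,4)])
    show "- ((- A wb, - A pb) + (\<rho> *\<^sub>R (pb - wb), \<rho> *\<^sub>R (wb - pb)))
      \<in> normal_cone (C1 \<mu>) pb \<times> normal_cone (C2 \<nu>) wb"
      using crit by (simp add: prox_coupling_grad_def)
  qed fact+
  with conv show ?thesis by blast
qed

end
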